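(* Let $(I,\preccurlyeq)$ be a directed set, let $S(\Lambda^{\preccurlyeq})$ be a direct spectrum over $(I,\preccurlyeq)$ with sets $\lambda_0(i)$, transports $\lambda^{\preccurlyeq}_{ij}$ and Bishop spaces $\mathcal F_i=(\lambda_0(i),F_i)$, and let $\mathcal F=(X,F)$ be a Bishop space. Let $S(\Lambda^{\preccurlyeq})\to\mathcal F$ be the contravariant direct spectrum over $(I,\preccurlyeq)$ with sets $\mathrm{Mor}(\mathcal F_i,\mathcal F)$, transports $(\lambda^{\preccurlyeq}_{ij})^+:\mathrm{Mor}(\mathcal F_j,\mathcal F)\to\mathrm{Mor}(\mathcal F_i,\mathcal F)$, $\phi\mapsto\phi\circ\lambda^{\preccurlyeq}_{ij}$ (for $i\preccurlyeq j$), and Bishop spaces $\mathcal F_i\to\mathcal F$. Then $\underset{\leftarrow}{\mathrm{Lim}}\,(\mathcal F_i\to\mathcal F)\simeq(\underset{\to}{\mathrm{Lim}}\,\mathcal F_i)\to\mathcal F$.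
   Context: Work in Bishop-style constructive mathematics. A directed set: a set with a reflexive transitive relation respecting equality, any two elements having a common upper bound. A direct family over $(I,\preccurlyeq)$: sets $\lambda_0(i)$ and functions $\lambda^{\preccurlyeq}_{ij}:\lambda_0(i)\to\lambda_0(j)$ for $i\preccurlyeq j$ with $\lambda^{\preccurlyeq}_{ii}=\mathrm{id}$ and $\lambda^{\preccurlyeq}_{ik}=\lambda^{\preccurlyeq}_{jk}\circ\lambda^{\preccurlyeq}_{ij}$. A contravariant direct family: sets $\mu_0(i)$ and functions $\mu^{\succcurlyeq}_{ji}:\mu_0(j)\to\mu_0(i)$ for $i\preccurlyeq j$ with $\mu^{\succcurlyeq}_{ii}=\mathrm{id}$, $\mu^{\succcurlyeq}_{ki}=\mu^{\succcurlyeq}_{ji}\circ\mu^{\succcurlyeq}_{kj}$. Bishop spaces: a Bishop topology on $X$ is a set $F$ of functions $X\to\mathbb R$ containing constants, closed under addition, composition with functions $\mathbb R\to\mathbb R$ uniformly continuous on every $[-n,n]$, and uniform limits; $\bigvee F_0$ = least Bishop topology containing $F_0$; Bishop morphism $(X,F)\to(Y,G)$: a function $h$ with $g\circ h\in F$ for all $g\in G$; Bishop isomorphism: bijective morphism with morphism inverse; $\simeq$: Bishop isomorphic. Exponential: $\mathcal F\to\mathcal G=(\mathrm{Mor}(\mathcal F,\mathcal G),\bigvee\{\phi_{x,g}:x\in X,g\in G\})$, $\phi_{x,g}(h)=g(h(x))$. A (contravariant) direct spectrum: a (contravariant) direct family with Bishop topologies on each set making all transports Bishop morphisms. Direct limit: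 $\sum^{\preccurlyeq}\lambda_0(i)$ = pairs $(i,x)$ with $(i,x)=(j,y)$ iff there is $k\succcurlyeq i,j$ with $\lambda^{\preccurlyeq}_{ik}(x)=\lambda^{\preccurlyeq}_{jk}(y)$; $\prod^{\succcurlyeq}F_i$ = dependent assignments $\Theta$ with $\Theta_i\in F_i$ and $\Theta_i=\Theta_j\circ\lambda^{\preccurlyeq}_{ij}$ for $i\preccurlyeq j$; $\underset{\to}{\mathrm{Lim}}\,\lambda_0(i)$ = classes $\mathrm{eql}_0(i,x)$ under that equality; $\mathrm{eql}_0f_\Theta(\mathrm{eql}_0(i,x))=\Theta_i(x)$; $\underset{\to}{\mathrm{Lim}}\,\mathcal F_i=(\underset{\to}{\mathrm{Lim}}\,\lambda_0(i),\bigvee\{\mathrm{eql}_0f_\Theta:\Theta\in\prod^{\succcurlyeq}F_i\})$. Inverse limit of a contravariant spectrum with sets $\mu_0(i)$, transports $\mu^{\succcurlyeq}_{ji}$, topologies $G_i$: $\prod^{\succcurlyeq}\mu_0(i)$ = dependent assignments $\Phi$ with $\Phi_i\in\mu_0(i)$, $\Phi_i=\mu^{\succcurlyeq}_{ji}(\Phi_j)$ for $i\preccurlyeq j$ (pointwise equality); $\pi_i(\Phi)=\Phi_i$; $\underset{\leftarrow}{\mathrm{Lim}}\,\mathcal G_i=(\prod^{\succcurlyeq}\mu_0(i),\bigvee\{g\circ\pi_i:i\in I,g\in G_i\})$. *)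

theory Defs
  imports Complex_Main "HOL-Library.FuncSet"
begin

text \<open>Functions on X are represented extensionally
(value undefined outside X), so that equality of functions is pointwise on X.\<close>

definition bishop_cont :: "(real \<Rightarrow> real) \<Rightarrow> bool" where
  "bishop_cont \<phi> \<longleftrightarrow> (\<forall>n::nat. uniformly_continuous_on {- real n .. real n} \<phi>)"

definition bishop_topology :: "'a set \<Rightarrow> ('a \<Rightarrow> real) set \<Rightarrow> bool" where
  "bishop_topology X F \<longleftrightarrow>
     F \<subseteq> extensional X \<and>
     (\<forall>c. (\<lambda>x\<in>X. c) \<in> F) \<and>
     (\<forall>f\<in>F. \<forall>g\<in>F. (\<lambda>x\<in>X. f x + g x) \<in> F) \<and>
     (\<forall>f\<in>F. \<forall>\<phi>. bishop_cont \<phi> \<longrightarrow> (\<lambda>x\<in>X. \<phi> (f x)) \<in> F) \<and>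
     (\<forall>f. f \<in> extensional X \<and> (\<forall>e>0. \<exists>g\<in>F. \<forall>x\<in>X. \<bar>f x - g x\<bar> \<le> e) \<longrightarrow> f \<in> F)"

definition bigvee :: "'a set \<Rightarrow> ('a \<Rightarrow> real) set \<Rightarrow> ('a \<Rightarrow> real) set" where
  "bigvee X F0 = \<Inter>{F. bishop_topology X F \<and> F0 \<subseteq> F}"

definition bmor :: "'a set \<Rightarrow> ('a \<Rightarrow> real) set \<Rightarrow> 'b set \<Rightarrow> ('b \<Rightarrow> real) set \<Rightarrow> ('a \<Rightarrow> 'b) set" where
  "bmor X F Y G = {h. h \<in> X \<rightarrow>\<^sub>E Y \<and> (\<forall>g\<in>G. (\<lambda>x\<in>X. g (h x)) \<in> F)}"

definition bishop_iso :: "'a set \<Rightarrow> ('a \<Rightarrow> real) set \<Rightarrow> 'b set \<Rightarrow> ('b \<Rightarrow> real) set \<Rightarrow> ('a \<Rightarrow> 'b) \<Rightarrow> bool" where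
  "bishop_iso X F Y G h \<longleftrightarrow>
     h \<in> bmor X F Y G \<and> bij_betw h X Y \<and> (\<lambda>y\<in>Y. inv_into X h y) \<in> bmor Y G X F"

definition bishop_isomorphic :: "'a set \<Rightarrow> ('a \<Rightarrow> real) set \<Rightarrow> 'b set \<Rightarrow> ('b \<Rightarrow> real) set \<Rightarrow> bool" where
  "bishop_isomorphic X F Y G \<longleftrightarrow> (\<exists>h. bishop_iso X F Y G h)"

definition exp_top :: "'a set \<Rightarrow> ('a \<Rightarrow> real) set \<Rightarrow> 'b set \<Rightarrow> ('b \<Rightarrow> real) set \<Rightarrow> (('a \<Rightarrow> 'b) \<Rightarrow> real) set" where
  "exp_top X F Y G = bigvee (bmor X F Y G)
     {(\<lambda>h\<in>bmor X F Y G. g (h x)) | x g. x \<in> X \<and> g \<in> G}"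

text \<open>Directed sets (equality is HOL equality, so respecting equality is automatic).\<close>
definition directed_set :: "'i set \<Rightarrow> ('i \<Rightarrow> 'i \<Rightarrow> bool) \<Rightarrow> bool" where
  "directed_set I le \<longleftrightarrow>
     (\<forall>i\<in>I. le i i) \<and>
     (\<forall>i\<in>I. \<forall>j\<in>I. \<forall>k\<in>I. le i j \<and> le j k \<longrightarrow> le i k) \<and>
     (\<forall>i\<in>I. \<forall>j\<in>I. \<exists>k\<in>I. le i k \<and> le j k)"

definition direct_family :: "'i set \<Rightarrow> ('i \<Rightarrow> 'i \<Rightarrow> bool) \<Rightarrow> ('i \<Rightarrow> 'a set) \<Rightarrow> ('i \<Rightarrow> 'i \<Rightarrow> 'a \<Rightarrow> 'a) \<Rightarrow> bool" where
  "direct_family I le lam0 lam \<longleftrightarrow>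
     (\<forall>i\<in>I. \<forall>j\<in>I. le i j \<longrightarrow> lam i j \<in> lam0 i \<rightarrow>\<^sub>E lam0 j) \<and>
     (\<forall>i\<in>I. lam i i = (\<lambda>x\<in>lam0 i. x)) \<and>
     (\<forall>i\<in>I. \<forall>j\<in>I. \<forall>k\<in>I. le i j \<and> le j k \<longrightarrow>
        lam i k = (\<lambda>x\<in>lam0 i. lam j k (lam i j x)))"

definition direct_spectrum :: "'i set \<Rightarrow> ('i \<Rightarrow> 'i \<Rightarrow> bool) \<Rightarrow> ('i \<Rightarrow> 'a set) \<Rightarrow> ('i \<Rightarrow> 'i \<Rightarrow> 'a \<Rightarrow> 'a)
     \<Rightarrow> ('i \<Rightarrow> ('a \<Rightarrow> real) set) \<Rightarrow> bool" where
  "direct_spectrum I le lam0 lam F \<longleftrightarrow>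
     direct_family I le lam0 lam \<and>
     (\<forall>i\<in>I. bishop_topology (lam0 i) (F i)) \<and>
     (\<forall>i\<in>I. \<forall>j\<in>I. le i j \<longrightarrow> lam i j \<in> bmor (lam0 i) (F i) (lam0 j) (F j))"

definition dl_rel :: "'i set \<Rightarrow> ('i \<Rightarrow> 'i \<Rightarrow> bool) \<Rightarrow> ('i \<Rightarrow> 'a set) \<Rightarrow> ('i \<Rightarrow> 'i \<Rightarrow> 'a \<Rightarrow> 'a)
     \<Rightarrow> (('i \<times> 'a) \<times> ('i \<times> 'a)) set" where
  "dl_rel I le lam0 lam = {((i, x), (j, y)). (i, x) \<in> Sigma I lam0 \<and> (j, y) \<in> Sigma I lam0 \<and>
     (\<exists>k\<in>I. le i k \<and> le j k \<and> lam i k x = lam j k y)}"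

definition dirlim_carrier :: "'i set \<Rightarrow> ('i \<Rightarrow> 'i \<Rightarrow> bool) \<Rightarrow> ('i \<Rightarrow> 'a set) \<Rightarrow> ('i \<Rightarrow> 'i \<Rightarrow> 'a \<Rightarrow> 'a)
     \<Rightarrow> ('i \<times> 'a) set set" where
  "dirlim_carrier I le lam0 lam = Sigma I lam0 // dl_rel I le lam0 lam"

definition dprod_top :: "'i set \<Rightarrow> ('i \<Rightarrow> 'i \<Rightarrow> bool) \<Rightarrow> ('i \<Rightarrow> 'a set) \<Rightarrow> ('i \<Rightarrow> 'i \<Rightarrow> 'a \<Rightarrow> 'a)
     \<Rightarrow> ('i \<Rightarrow> ('a \<Rightarrow> real) set) \<Rightarrow> ('i \<Rightarrow> 'a \<Rightarrow> real) set" where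
  "dprod_top I le lam0 lam F = {\<Theta>. (\<forall>i\<in>I. \<Theta> i \<in> F i) \<and>
     (\<forall>i\<in>I. \<forall>j\<in>I. le i j \<longrightarrow> \<Theta> i = (\<lambda>x\<in>lam0 i. \<Theta> j (lam i j x)))}"

text \<open>eql0 f_Theta (eql0 (i,x)) = Theta_i x.\<close>
definition eql_f :: "('i \<times> 'a) set set \<Rightarrow> ('i \<Rightarrow> 'a \<Rightarrow> real) \<Rightarrow> ('i \<times> 'a) set \<Rightarrow> real" where
  "eql_f C \<Theta> = (\<lambda>c\<in>C. the_elem ((\<lambda>(i, x). \<Theta> i x) ` c))"

definition dirlim_top :: "'i set \<Rightarrow> ('i \<Rightarrow> 'i \<Rightarrow> bool) \<Rightarrow> ('i \<Rightarrow> 'a set) \<Rightarrow> ('i \<Rightarrow> 'i \<Rightarrow> 'a \<Rightarrow> 'a)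
     \<Rightarrow> ('i \<Rightarrow> ('a \<Rightarrow> real) set) \<Rightarrow> (('i \<times> 'a) set \<Rightarrow> real) set" where
  "dirlim_top I le lam0 lam F = bigvee (dirlim_carrier I le lam0 lam)
     {eql_f (dirlim_carrier I le lam0 lam) \<Theta> | \<Theta>. \<Theta> \<in> dprod_top I le lam0 lam F}"

text \<open>Inverse limit of a contravariant direct spectrum with sets mu0 i,
transports mu j i : mu0 j \<rightarrow> mu0 i (i \<preccurlyeq> j) and topologies G i.\<close>
definition invlim_carrier :: "'i set \<Rightarrow> ('i \<Rightarrow> 'i \<Rightarrow> bool) \<Rightarrow> ('i \<Rightarrow> 'b set) \<Rightarrow> ('i \<Rightarrow> 'i \<Rightarrow> 'b \<Rightarrow> 'b)
     \<Rightarrow> ('i \<Rightarrow> 'b) set" where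
  "invlim_carrier I le mu0 mu = {\<Phi>. \<Phi> \<in> (\<Pi>\<^sub>E i\<in>I. mu0 i) \<and>
     (\<forall>i\<in>I. \<forall>j\<in>I. le i j \<longrightarrow> \<Phi> i = mu j i (\<Phi> j))}"

definition invlim_top :: "'i set \<Rightarrow> ('i \<Rightarrow> 'i \<Rightarrow> bool) \<Rightarrow> ('i \<Rightarrow> 'b set) \<Rightarrow> ('i \<Rightarrow> 'i \<Rightarrow> 'b \<Rightarrow> 'b)
     \<Rightarrow> ('i \<Rightarrow> ('b \<Rightarrow> real) set) \<Rightarrow> (('i \<Rightarrow> 'b) \<Rightarrow> real) set" where
  "invlim_top I le mu0 mu G = bigvee (invlim_carrier I le mu0 mu)
     {(\<lambda>\<Phi>\<in>invlim_carrier I le mu0 mu. g (\<Phi> i)) | i g. i \<in> I \<and> g \<in> G i}"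

definition to_mor0 :: "('i \<Rightarrow> 'a set) \<Rightarrow> ('i \<Rightarrow> ('a \<Rightarrow> real) set) \<Rightarrow> 'x set \<Rightarrow> ('x \<Rightarrow> real) set
     \<Rightarrow> 'i \<Rightarrow> ('a \<Rightarrow> 'x) set" where
  "to_mor0 lam0 F X FX i = bmor (lam0 i) (F i) X FX"

definition to_transp :: "('i \<Rightarrow> 'a set) \<Rightarrow> ('i \<Rightarrow> 'i \<Rightarrow> 'a \<Rightarrow> 'a)
     \<Rightarrow> 'i \<Rightarrow> 'i \<Rightarrow> ('a \<Rightarrow> 'x) \<Rightarrow> ('a \<Rightarrow> 'x)" where
  "to_transp lam0 lam j i \<phi> = (\<lambda>x\<in>lam0 i. \<phi> (lam i j x))"

definition to_top :: "('i \<Rightarrow> 'a set) \<Rightarrow> ('i \<Rightarrow> ('a \<Rightarrow> real) set) \<Rightarrow> 'x set \<Rightarrow> ('x \<Rightarrow> real) set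
     \<Rightarrow> 'i \<Rightarrow> (('a \<Rightarrow> 'x) \<Rightarrow> real) set" where
  "to_top lam0 F X FX i = exp_top (lam0 i) (F i) X FX"

end

(* A compatible family (phi_i)_i of morphisms F_i -> F, i.e. a point of the inverse
   limit, is constant on the classes eql_0(i,x) and so descends to a map on the direct
   limit; composed with g in FX it is exactly the generator eql_0 f_Theta for
   Theta_i = g o phi_i, hence a morphism. Conversely a morphism m on the direct limit
   yields the compatible family (m o eql_i)_i, and the two constructions are mutually
   inverse. Both are Bishop morphisms by the lifting of morphisms over generated
   topologies: evaluating the glued map at eql_0(i,x) is the projection to stage i
   followed by evaluation at x, and the projection to stage i of the inverse map is
   precomposition with the canonical morphism eql_i : F_i -> Lim F_i. *)

theory Submission
  imports Defs
begin

lemma bishop_topology_extensional: "bishop_topology Y (extensional Y)"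
  unfolding bishop_topology_def by auto

lemma bishop_topology_extensionalD: "bishop_topology X F \<Longrightarrow> f \<in> F \<Longrightarrow> f \<in> extensional X"
  unfolding bishop_topology_def by blast

lemma bishop_topology_Inter:
  assumes "Ts \<noteq> {}" and top: "\<And>T. T \<in> Ts \<Longrightarrow> bishop_topology Y T"
  shows "bishop_topology Y (\<Inter>Ts)"
  unfolding bishop_topology_def
proof (intro conjI allI ballI impI)
  show "\<Inter>Ts \<subseteq> extensional Y"
    using assms unfolding bishop_topology_def by blast
next
  fix f assume f: "f \<in> extensional Y \<and> (\<forall>e>0. \<exists>g\<in>\<Inter>Ts. \<forall>x\<in>Y. \<bar>f x - g x\<bar> \<le> e)"
  show "f \<in> \<Inter>Ts"
  proof
    fix T assume "T \<in> Ts"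
    then show "f \<in> T"
      using f top[of T] unfolding bishop_topology_def by (meson InterE)
  qed
qed (use top in \<open>auto simp: bishop_topology_def\<close>)

lemma bishop_topology_bigvee:
  assumes "G0 \<subseteq> extensional Y"
  shows "bishop_topology Y (bigvee Y G0)"
  unfolding bigvee_def
  using assms bishop_topology_extensional[of Y] by (intro bishop_topology_Inter) auto

lemma generator_in_bigvee: "g \<in> G0 \<Longrightarrow> g \<in> bigvee Y G0"
  unfolding bigvee_def by blast

lemma bigvee_least: "bishop_topology Y T \<Longrightarrow> G0 \<subseteq> T \<Longrightarrow> bigvee Y G0 \<subseteq> T"
  unfolding bigvee_def by blast

lemma bishop_topology_pullback:
  assumes top: "bishop_topology X F" and h: "h \<in> X \<rightarrow> Y"
  shows "bishop_topology Y {u \<in> extensional Y. (\<lambda>x\<in>X. u (h x)) \<in> F}"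
    (is "bishop_topology Y ?T")
  unfolding bishop_topology_def
proof (intro conjI allI ballI impI)
  fix c :: real
  have "(\<lambda>x\<in>X. (\<lambda>y\<in>Y. c) (h x)) = (\<lambda>x\<in>X. c)"
    using h by (intro restrict_ext) auto
  then show "(\<lambda>y\<in>Y. c) \<in> ?T"
    using top unfolding bishop_topology_def by auto
next
  fix u v assume "u \<in> ?T" "v \<in> ?T"
  then have "(\<lambda>x\<in>X. (\<lambda>x\<in>X. u (h x)) x + (\<lambda>x\<in>X. v (h x)) x) \<in> F"
    using top unfolding bishop_topology_def by blast
  moreover have "(\<lambda>x\<in>X. (\<lambda>y\<in>Y. u y + v y) (h x))
      = (\<lambda>x\<in>X. (\<lambda>x\<in>X. u (h x)) x + (\<lambda>x\<in>X. v (h x)) x)"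
    using h by (intro restrict_ext) auto
  ultimately show "(\<lambda>y\<in>Y. u y + v y) \<in> ?T"
    by simp
next
  fix u \<phi> assume "u \<in> ?T" "bishop_cont \<phi>"
  moreover have "(\<lambda>x\<in>X. (\<lambda>y\<in>Y. \<phi> (u y)) (h x)) = (\<lambda>x\<in>X. \<phi> ((\<lambda>x\<in>X. u (h x)) x))"
    using h by (intro restrict_ext) auto
  ultimately show "(\<lambda>y\<in>Y. \<phi> (u y)) \<in> ?T"
    using top unfolding bishop_topology_def by auto
next
  fix u assume u: "u \<in> extensional Y \<and> (\<forall>e>0. \<exists>v\<in>?T. \<forall>y\<in>Y. \<bar>u y - v y\<bar> \<le> e)"
  have "\<exists>w\<in>F. \<forall>x\<in>X. \<bar>(\<lambda>x\<in>X. u (h x)) x - w x\<bar> \<le> e" if "e > 0" for e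
  proof -
    obtain v where "v \<in> ?T" "\<forall>y\<in>Y. \<bar>u y - v y\<bar> \<le> e"
      using u \<open>e > 0\<close> by blast
    then show ?thesis
      using h by (intro bexI[of _ "\<lambda>x\<in>X. v (h x)"]) auto
  qed
  then show "u \<in> ?T"
    using u top unfolding bishop_topology_def by auto
qed auto

lemma bmor_bigveeI:
  assumes "bishop_topology X F" and "h \<in> X \<rightarrow>\<^sub>E Y" and "G0 \<subseteq> extensional Y"
    and "\<And>g. g \<in> G0 \<Longrightarrow> (\<lambda>x\<in>X. g (h x)) \<in> F"
  shows "h \<in> bmor X F Y (bigvee Y G0)"
proof -
  have "bigvee Y G0 \<subseteq> {u \<in> extensional Y. (\<lambda>x\<in>X. u (h x)) \<in> F}"
    using assms by (intro bigvee_least bishop_topology_pullback) auto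
  then show ?thesis
    using assms(2) unfolding bmor_def by blast
qed

lemma bmor_compose:
  assumes "e \<in> bmor X F Y G" and "\<phi> \<in> bmor Y G Z H"
  shows "(\<lambda>x\<in>X. \<phi> (e x)) \<in> bmor X F Z H"
  unfolding bmor_def
proof (intro CollectI conjI ballI)
  show "(\<lambda>x\<in>X. \<phi> (e x)) \<in> X \<rightarrow>\<^sub>E Z"
    using assms unfolding bmor_def by auto
next
  fix g assume "g \<in> H"
  then have "(\<lambda>y\<in>Y. g (\<phi> y)) \<in> G"
    using assms(2) unfolding bmor_def by blast
  then have "(\<lambda>x\<in>X. (\<lambda>y\<in>Y. g (\<phi> y)) (e x)) \<in> F"
    using assms(1) unfolding bmor_def by blast
  moreover have "(\<lambda>x\<in>X. (\<lambda>y\<in>Y. g (\<phi> y)) (e x)) = (\<lambda>x\<in>X. g ((\<lambda>x\<in>X. \<phi> (e x)) x))"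
    using assms(1) unfolding bmor_def by (intro restrict_ext) auto
  ultimately show "(\<lambda>x\<in>X. g ((\<lambda>x\<in>X. \<phi> (e x)) x)) \<in> F"
    by simp
qed

lemma bishop_isoI:
  assumes h: "h \<in> bmor X F Y G" and k: "k \<in> bmor Y G X F"
    and kh: "\<And>x. x \<in> X \<Longrightarrow> k (h x) = x" and hk: "\<And>y. y \<in> Y \<Longrightarrow> h (k y) = y"
  shows "bishop_iso X F Y G h"
proof -
  have hX: "h \<in> X \<rightarrow>\<^sub>E Y" and kY: "k \<in> Y \<rightarrow>\<^sub>E X"
    using h k unfolding bmor_def by auto
  then have bij: "bij_betw h X Y"
    using kh hk by (intro bij_betw_byWitness[of X k]) auto
  have "(\<lambda>y\<in>Y. inv_into X h y) = (\<lambda>y\<in>Y. k y)"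
    using bij kY kh hk by (intro restrict_ext inv_into_f_eq) (auto simp: bij_betw_def)
  also have "\<dots> = k"
    using kY by (simp add: extensional_restrict)
  finally show ?thesis
    unfolding bishop_iso_def using h k bij by simp
qed

lemma bishop_topology_exp_top: "bishop_topology (bmor X F Y G) (exp_top X F Y G)"
  unfolding exp_top_def by (rule bishop_topology_bigvee) auto

lemma evaluation_in_exp_top:
  "x \<in> X \<Longrightarrow> g \<in> G \<Longrightarrow> (\<lambda>\<phi>\<in>bmor X F Y G. g (\<phi> x)) \<in> exp_top X F Y G"
  unfolding exp_top_def by (rule generator_in_bigvee) blast

lemma bmor_into_exp_topI:
  assumes "bishop_topology Z T" and H: "H \<in> Z \<rightarrow>\<^sub>E bmor X F Y G"
    and "\<And>x g. x \<in> X \<Longrightarrow> g \<in> G \<Longrightarrow> (\<lambda>z\<in>Z. g (H z x)) \<in> T"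
  shows "H \<in> bmor Z T (bmor X F Y G) (exp_top X F Y G)"
  unfolding exp_top_def
proof (rule bmor_bigveeI)
  fix u assume "u \<in> {\<lambda>\<phi>\<in>bmor X F Y G. g (\<phi> x) | x g. x \<in> X \<and> g \<in> G}"
  then obtain x g where "x \<in> X" "g \<in> G" "u = (\<lambda>\<phi>\<in>bmor X F Y G. g (\<phi> x))"
    by blast
  moreover have "(\<lambda>z\<in>Z. (\<lambda>\<phi>\<in>bmor X F Y G. g (\<phi> x)) (H z)) = (\<lambda>z\<in>Z. g (H z x))"
    using H by (intro restrict_ext) auto
  ultimately show "(\<lambda>z\<in>Z. u (H z)) \<in> T"
    using assms(3) by simp
qed (use assms in auto)

lemma bmor_precompose:
  assumes e: "e \<in> bmor X' F' X F"
  shows "(\<lambda>\<phi>\<in>bmor X F Y G. \<lambda>x\<in>X'. \<phi> (e x))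
    \<in> bmor (bmor X F Y G) (exp_top X F Y G) (bmor X' F' Y G) (exp_top X' F' Y G)"
proof (rule bmor_into_exp_topI[OF bishop_topology_exp_top])
  show "(\<lambda>\<phi>\<in>bmor X F Y G. \<lambda>x\<in>X'. \<phi> (e x)) \<in> bmor X F Y G \<rightarrow>\<^sub>E bmor X' F' Y G"
    using bmor_compose[OF e] by auto
next
  fix x g assume "x \<in> X'" "g \<in> G"
  moreover have "e x \<in> X"
    using e \<open>x \<in> X'\<close> unfolding bmor_def by auto
  moreover have "(\<lambda>\<phi>\<in>bmor X F Y G. g ((\<lambda>\<phi>\<in>bmor X F Y G. \<lambda>x\<in>X'. \<phi> (e x)) \<phi> x))
      = (\<lambda>\<phi>\<in>bmor X F Y G. g (\<phi> (e x)))"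
    using \<open>x \<in> X'\<close> by (intro restrict_ext) simp
  ultimately show "(\<lambda>\<phi>\<in>bmor X F Y G. g ((\<lambda>\<phi>\<in>bmor X F Y G. \<lambda>x\<in>X'. \<phi> (e x)) \<phi> x))
      \<in> exp_top X F Y G"
    using evaluation_in_exp_top by metis
qed

lemma bishop_topology_invlim_top:
  "bishop_topology (invlim_carrier I le mu0 mu) (invlim_top I le mu0 mu G)"
  unfolding invlim_top_def by (rule bishop_topology_bigvee) auto

lemma projection_comp_in_invlim_top:
  "i \<in> I \<Longrightarrow> g \<in> G i \<Longrightarrow>
    (\<lambda>\<Phi>\<in>invlim_carrier I le mu0 mu. g (\<Phi> i)) \<in> invlim_top I le mu0 mu G"
  unfolding invlim_top_def by (rule generator_in_bigvee) blast

lemma bmor_into_invlim_topI: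
  assumes "bishop_topology Z T" and H: "H \<in> Z \<rightarrow>\<^sub>E invlim_carrier I le mu0 mu"
    and "\<And>i. i \<in> I \<Longrightarrow> (\<lambda>z\<in>Z. H z i) \<in> bmor Z T (mu0 i) (G i)"
  shows "H \<in> bmor Z T (invlim_carrier I le mu0 mu) (invlim_top I le mu0 mu G)"
  unfolding invlim_top_def
proof (rule bmor_bigveeI)
  fix u assume "u \<in> {\<lambda>\<Phi>\<in>invlim_carrier I le mu0 mu. g (\<Phi> i) | i g. i \<in> I \<and> g \<in> G i}"
  then obtain i g where "i \<in> I" "g \<in> G i" "u = (\<lambda>\<Phi>\<in>invlim_carrier I le mu0 mu. g (\<Phi> i))"
    by blast
  moreover have "(\<lambda>z\<in>Z. (\<lambda>\<Phi>\<in>invlim_carrier I le mu0 mu. g (\<Phi> i)) (H z))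
      = (\<lambda>z\<in>Z. g ((\<lambda>z\<in>Z. H z i) z))"
    using H by (intro restrict_ext) auto
  ultimately show "(\<lambda>z\<in>Z. u (H z)) \<in> T"
    using assms(3) unfolding bmor_def by auto
qed (use assms in auto)

definition eql_map :: "('i \<times> 'a) set set \<Rightarrow> ('i \<Rightarrow> 'a \<Rightarrow> 'b) \<Rightarrow> ('i \<times> 'a) set \<Rightarrow> 'b" where
  "eql_map C \<Phi> = (\<lambda>c\<in>C. the_elem ((\<lambda>(i, x). \<Phi> i x) ` c))"

lemma eql_f_eq_eql_map: "eql_f C \<Theta> = eql_map C \<Theta>"
  unfolding eql_f_def eql_map_def ..

locale direct_system =
  fixes I :: "'i set" and le :: "'i \<Rightarrow> 'i \<Rightarrow> bool"
    and lam0 :: "'i \<Rightarrow> 'a set" and lam :: "'i \<Rightarrow> 'i \<Rightarrow> 'a \<Rightarrow> 'a"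
    and F :: "'i \<Rightarrow> ('a \<Rightarrow> real) set"
  assumes directed: "directed_set I le"
    and spectrum: "direct_spectrum I le lam0 lam F"
begin

abbreviation "DLim \<equiv> dirlim_carrier I le lam0 lam"
abbreviation "DLimT \<equiv> dirlim_top I le lam0 lam F"

definition eql :: "'i \<Rightarrow> 'a \<Rightarrow> ('i \<times> 'a) set" where
  "eql i x = dl_rel I le lam0 lam `` {(i, x)}"

definition compatible :: "('i \<Rightarrow> 'a \<Rightarrow> 'b) \<Rightarrow> bool" where
  "compatible \<Phi> \<longleftrightarrow> (\<forall>i\<in>I. \<forall>j\<in>I. le i j \<longrightarrow> (\<forall>x\<in>lam0 i. \<Phi> i x = \<Phi> j (lam i j x)))"

lemma le_refl_directed: "i \<in> I \<Longrightarrow> le i i"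
  using directed unfolding directed_set_def by blast

lemma le_trans_directed: "i \<in> I \<Longrightarrow> j \<in> I \<Longrightarrow> k \<in> I \<Longrightarrow> le i j \<Longrightarrow> le j k \<Longrightarrow> le i k"
  using directed unfolding directed_set_def by blast

lemma upper_bound_directed: "i \<in> I \<Longrightarrow> j \<in> I \<Longrightarrow> \<exists>k\<in>I. le i k \<and> le j k"
  using directed unfolding directed_set_def by blast

lemma transport_in: "i \<in> I \<Longrightarrow> j \<in> I \<Longrightarrow> le i j \<Longrightarrow> x \<in> lam0 i \<Longrightarrow> lam i j x \<in> lam0 j"
  using spectrum unfolding direct_spectrum_def direct_family_def by blast

lemma transport_id: "i \<in> I \<Longrightarrow> x \<in> lam0 i \<Longrightarrow> lam i i x = x"
  using spectrum unfolding direct_spectrum_def direct_family_def by auto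

lemma transport_trans:
  assumes "i \<in> I" "j \<in> I" "k \<in> I" "le i j" "le j k" "x \<in> lam0 i"
  shows "lam i k x = lam j k (lam i j x)"
proof -
  have "lam i k = (\<lambda>x\<in>lam0 i. lam j k (lam i j x))"
    using spectrum assms unfolding direct_spectrum_def direct_family_def by blast
  then show ?thesis
    using assms by simp
qed

lemma bishop_topology_stage: "i \<in> I \<Longrightarrow> bishop_topology (lam0 i) (F i)"
  using spectrum unfolding direct_spectrum_def by blast

lemma dl_rel_iff: "((i, x), (j, y)) \<in> dl_rel I le lam0 lam \<longleftrightarrow>
    i \<in> I \<and> x \<in> lam0 i \<and> j \<in> I \<and> y \<in> lam0 j \<and> (\<exists>k\<in>I. le i k \<and> le j k \<and> lam i k x = lam j k y)"
  unfolding dl_rel_def by auto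

text \<open>Transitivity is where directedness enters: the two witnesses are pushed to a
common upper bound.\<close>

lemma equiv_dl_rel: "equiv (Sigma I lam0) (dl_rel I le lam0 lam)"
proof (rule equivI)
  show "dl_rel I le lam0 lam \<subseteq> Sigma I lam0 \<times> Sigma I lam0"
    unfolding dl_rel_def by auto
  show "refl_on (Sigma I lam0) (dl_rel I le lam0 lam)"
    unfolding refl_on_def by (auto simp: dl_rel_iff intro: le_refl_directed)
  show "sym (dl_rel I le lam0 lam)"
    unfolding sym_def by (auto simp: dl_rel_iff)
  show "trans (dl_rel I le lam0 lam)"
  proof (rule transI, clarify)
    fix i x j y l z
    assume "((i, x), (j, y)) \<in> dl_rel I le lam0 lam" "((j, y), (l, z)) \<in> dl_rel I le lam0 lam"
    then obtain k1 k2 where H: "i \<in> I" "x \<in> lam0 i" "j \<in> I" "y \<in> lam0 j" "l \<in> I" "z \<in> lam0 l"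
      "k1 \<in> I" "le i k1" "le j k1" "lam i k1 x = lam j k1 y"
      "k2 \<in> I" "le j k2" "le l k2" "lam j k2 y = lam l k2 z"
      unfolding dl_rel_iff by blast
    obtain k where k: "k \<in> I" "le k1 k" "le k2 k"
      using upper_bound_directed[OF H(7,11)] by blast
    have "lam i k x = lam k1 k (lam i k1 x)"
      using H k by (intro transport_trans) auto
    also have "\<dots> = lam k1 k (lam j k1 y)"
      using H by simp
    also have "\<dots> = lam j k y"
      using H k by (intro transport_trans[symmetric]) auto
    also have "\<dots> = lam k2 k (lam j k2 y)"
      using H k by (intro transport_trans) auto
    also have "\<dots> = lam k2 k (lam l k2 z)"
      using H by simp
    also have "\<dots> = lam l k z"
      using H k by (intro transport_trans[symmetric]) auto
    finally show "((i, x), (l, z)) \<in> dl_rel I le lam0 lam"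
      unfolding dl_rel_iff using H k by (meson le_trans_directed)
  qed
qed

lemma eql_in_DLim: "i \<in> I \<Longrightarrow> x \<in> lam0 i \<Longrightarrow> eql i x \<in> DLim"
  unfolding eql_def dirlim_carrier_def by (rule quotientI) auto

lemma DLim_cases:
  assumes "c \<in> DLim"
  obtains i x where "i \<in> I" "x \<in> lam0 i" "c = eql i x"
  using assms unfolding dirlim_carrier_def eql_def by (auto elim!: quotientE)

lemma eql_transport: "i \<in> I \<Longrightarrow> j \<in> I \<Longrightarrow> le i j \<Longrightarrow> x \<in> lam0 i \<Longrightarrow> eql j (lam i j x) = eql i x"
  unfolding eql_def
  by (rule equiv_class_eq[OF equiv_dl_rel])
    (auto simp: dl_rel_iff transport_in transport_id le_refl_directed intro!: bexI[of _ j])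

lemma compatibleD:
  "compatible \<Phi> \<Longrightarrow> i \<in> I \<Longrightarrow> j \<in> I \<Longrightarrow> le i j \<Longrightarrow> x \<in> lam0 i \<Longrightarrow> \<Phi> i x = \<Phi> j (lam i j x)"
  unfolding compatible_def by blast

text \<open>A compatible family is constant on each equivalence class, so
\<^const>\<open>the_elem\<close> in \<^const>\<open>eql_map\<close> picks its common value.\<close>

lemma eql_map_eql:
  assumes "compatible \<Phi>" "i \<in> I" "x \<in> lam0 i"
  shows "eql_map DLim \<Phi> (eql i x) = \<Phi> i x"
proof -
  have const: "(\<lambda>(j, y). \<Phi> j y) p = \<Phi> i x" if p: "p \<in> eql i x" for p
  proof (cases p)
    case (Pair j y)
    then have "((i, x), (j, y)) \<in> dl_rel I le lam0 lam"
      using p unfolding eql_def by simp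
    then obtain k where H: "j \<in> I" "y \<in> lam0 j" "k \<in> I" "le i k" "le j k" "lam i k x = lam j k y"
      unfolding dl_rel_iff by blast
    have "\<Phi> i x = \<Phi> k (lam i k x)"
      using compatibleD[OF assms(1) assms(2) H(3,4) assms(3)] .
    also have "\<dots> = \<Phi> j y"
      using compatibleD[OF assms(1) H(1,3,5,2)] H(6) by simp
    finally show ?thesis
      using Pair by simp
  qed
  have "(i, x) \<in> eql i x"
    unfolding eql_def using assms by (intro equiv_class_self[OF equiv_dl_rel]) simp
  then have "eql i x \<noteq> {}"
    by blast
  then show ?thesis
    unfolding eql_map_def using eql_in_DLim[OF assms(2,3)] the_elem_image_unique[OF _ const]
    by simp
qed

lemma compatible_iff_restrict:
  assumes ext: "\<And>i. i \<in> I \<Longrightarrow> \<Phi> i \<in> extensional (lam0 i)"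
  shows "compatible \<Phi> \<longleftrightarrow> (\<forall>i\<in>I. \<forall>j\<in>I. le i j \<longrightarrow> \<Phi> i = (\<lambda>x\<in>lam0 i. \<Phi> j (lam i j x)))"
proof
  assume c: "compatible \<Phi>"
  show "\<forall>i\<in>I. \<forall>j\<in>I. le i j \<longrightarrow> \<Phi> i = (\<lambda>x\<in>lam0 i. \<Phi> j (lam i j x))"
  proof (intro ballI impI)
    fix i j assume "i \<in> I" "j \<in> I" "le i j"
    then show "\<Phi> i = (\<lambda>x\<in>lam0 i. \<Phi> j (lam i j x))"
      using compatibleD[OF c] by (intro extensionalityI[OF ext]) auto
  qed
next
  assume eq: "\<forall>i\<in>I. \<forall>j\<in>I. le i j \<longrightarrow> \<Phi> i = (\<lambda>x\<in>lam0 i. \<Phi> j (lam i j x))"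
  show "compatible \<Phi>"
    unfolding compatible_def
  proof (intro ballI impI)
    fix i j x assume "i \<in> I" "j \<in> I" "le i j" "x \<in> lam0 i"
    moreover from eq \<open>i \<in> I\<close> \<open>j \<in> I\<close> \<open>le i j\<close> have "\<Phi> i = (\<lambda>x\<in>lam0 i. \<Phi> j (lam i j x))"
      by blast
    ultimately show "\<Phi> i x = \<Phi> j (lam i j x)"
      by simp
  qed
qed

lemma dprod_top_compatible:
  assumes "\<Theta> \<in> dprod_top I le lam0 lam F"
  shows "compatible \<Theta>"
proof -
  have ext: "\<Theta> i \<in> extensional (lam0 i)" if "i \<in> I" for i
  proof -
    have "\<Theta> i \<in> F i"
      using assms that unfolding dprod_top_def by blast
    then show ?thesis
      using bishop_topology_extensionalD[OF bishop_topology_stage[OF that]] by blast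
  qed
  have "\<forall>i\<in>I. \<forall>j\<in>I. le i j \<longrightarrow> \<Theta> i = (\<lambda>x\<in>lam0 i. \<Theta> j (lam i j x))"
    using assms unfolding dprod_top_def by blast
  then show ?thesis
    using compatible_iff_restrict[OF ext] by blast
qed

lemma eql_bmor:
  assumes "i \<in> I"
  shows "(\<lambda>x\<in>lam0 i. eql i x) \<in> bmor (lam0 i) (F i) DLim DLimT"
  unfolding dirlim_top_def
proof (rule bmor_bigveeI[OF bishop_topology_stage[OF assms]])
  show "(\<lambda>x\<in>lam0 i. eql i x) \<in> lam0 i \<rightarrow>\<^sub>E DLim"
    using eql_in_DLim assms by auto
  show "{eql_f DLim \<Theta> | \<Theta>. \<Theta> \<in> dprod_top I le lam0 lam F} \<subseteq> extensional DLim"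
    unfolding eql_f_def by auto
next
  fix u assume "u \<in> {eql_f DLim \<Theta> | \<Theta>. \<Theta> \<in> dprod_top I le lam0 lam F}"
  then obtain \<Theta> where \<Theta>: "\<Theta> \<in> dprod_top I le lam0 lam F" and u: "u = eql_map DLim \<Theta>"
    by (auto simp: eql_f_eq_eql_map)
  have "(\<lambda>x\<in>lam0 i. u ((\<lambda>x\<in>lam0 i. eql i x) x)) = (\<lambda>x\<in>lam0 i. \<Theta> i x)"
    using eql_map_eql[OF dprod_top_compatible[OF \<Theta>] assms] u by (intro restrict_ext) simp
  also have "\<dots> = \<Theta> i"
    using \<Theta> assms bishop_topology_stage[OF assms] unfolding dprod_top_def
    by (auto simp: extensional_restrict dest: bishop_topology_extensionalD)
  finally show "(\<lambda>x\<in>lam0 i. u ((\<lambda>x\<in>lam0 i. eql i x) x)) \<in> F i"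
    using \<Theta> assms unfolding dprod_top_def by simp
qed

abbreviation "cocones X FX \<equiv> invlim_carrier I le (to_mor0 lam0 F X FX) (to_transp lam0 lam)"
abbreviation "cocones_top X FX \<equiv>
  invlim_top I le (to_mor0 lam0 F X FX) (to_transp lam0 lam) (to_top lam0 F X FX)"

lemma mem_cocones_iff:
  "\<Phi> \<in> cocones X FX \<longleftrightarrow> \<Phi> \<in> (\<Pi>\<^sub>E i\<in>I. bmor (lam0 i) (F i) X FX) \<and> compatible \<Phi>"
proof (cases "\<Phi> \<in> (\<Pi>\<^sub>E i\<in>I. bmor (lam0 i) (F i) X FX)")
  case True
  then have "\<Phi> i \<in> extensional (lam0 i)" if "i \<in> I" for i
    using that unfolding bmor_def by (auto simp: PiE_iff)
  then show ?thesis
    using True compatible_iff_restrict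
    unfolding invlim_carrier_def to_mor0_def to_transp_def by blast
qed (simp add: invlim_carrier_def to_mor0_def)

definition glue :: "'x set \<Rightarrow> ('x \<Rightarrow> real) set \<Rightarrow> ('i \<Rightarrow> 'a \<Rightarrow> 'x) \<Rightarrow> ('i \<times> 'a) set \<Rightarrow> 'x" where
  "glue X FX = (\<lambda>\<Phi>\<in>cocones X FX. eql_map DLim \<Phi>)"

definition components :: "'x set \<Rightarrow> ('x \<Rightarrow> real) set \<Rightarrow> (('i \<times> 'a) set \<Rightarrow> 'x) \<Rightarrow> 'i \<Rightarrow> 'a \<Rightarrow> 'x" where
  "components X FX = (\<lambda>m\<in>bmor DLim DLimT X FX. \<lambda>i\<in>I. \<lambda>x\<in>lam0 i. m (eql i x))"

lemma eql_map_bmor: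
  assumes \<Phi>: "\<Phi> \<in> cocones X FX"
  shows "eql_map DLim \<Phi> \<in> bmor DLim DLimT X FX"
proof -
  have \<Phi>_mor: "\<Phi> i \<in> bmor (lam0 i) (F i) X FX" if "i \<in> I" for i
    using \<Phi> that unfolding mem_cocones_iff by auto
  have \<Phi>_compat: "compatible \<Phi>"
    using \<Phi> unfolding mem_cocones_iff by blast
  have "eql_map DLim \<Phi> \<in> DLim \<rightarrow>\<^sub>E X"
  proof
    fix c assume "c \<in> DLim"
    then obtain i x where "i \<in> I" "x \<in> lam0 i" "c = eql i x"
      by (rule DLim_cases)
    then show "eql_map DLim \<Phi> c \<in> X"
      using eql_map_eql[OF \<Phi>_compat] \<Phi>_mor unfolding bmor_def by auto
  qed (simp add: eql_map_def)
  moreover have "(\<lambda>c\<in>DLim. g (eql_map DLim \<Phi> c)) \<in> DLimT" if g: "g \<in> FX" for g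
  proof -
    define \<Theta> where "\<Theta> = (\<lambda>i. \<lambda>x\<in>lam0 i. g (\<Phi> i x))"
    have "compatible \<Theta>"
      unfolding compatible_def
    proof (intro ballI impI)
      fix i j x assume "i \<in> I" "j \<in> I" "le i j" "x \<in> lam0 i"
      then show "\<Theta> i x = \<Theta> j (lam i j x)"
        using transport_in compatibleD[OF \<Phi>_compat] unfolding \<Theta>_def by simp
    qed
    moreover have "\<Theta> i \<in> F i" if "i \<in> I" for i
      using \<Phi>_mor[OF that] g unfolding bmor_def \<Theta>_def by blast
    ultimately have \<Theta>: "\<Theta> \<in> dprod_top I le lam0 lam F"
      using compatible_iff_restrict[of \<Theta>] unfolding dprod_top_def \<Theta>_def by simp
    have "(\<lambda>c\<in>DLim. g (eql_map DLim \<Phi> c)) = eql_map DLim \<Theta>"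
    proof (rule extensionalityI[where A = DLim])
      fix c assume "c \<in> DLim"
      then obtain i x where "i \<in> I" "x \<in> lam0 i" "c = eql i x"
        by (rule DLim_cases)
      then show "(\<lambda>c\<in>DLim. g (eql_map DLim \<Phi> c)) c = eql_map DLim \<Theta> c"
        using eql_map_eql[OF \<Phi>_compat] eql_map_eql[OF \<open>compatible \<Theta>\<close>] by (simp add: \<Theta>_def eql_in_DLim)
    qed (simp_all add: eql_map_def)
    then show ?thesis
      unfolding dirlim_top_def using \<Theta> by (auto simp: eql_f_eq_eql_map intro: generator_in_bigvee)
  qed
  ultimately show ?thesis
    unfolding bmor_def by blast
qed

lemma components_in_cocones:
  assumes m: "m \<in> bmor DLim DLimT X FX"
  shows "(\<lambda>i\<in>I. \<lambda>x\<in>lam0 i. m (eql i x)) \<in> cocones X FX"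
  unfolding mem_cocones_iff
proof
  have "(\<lambda>x\<in>lam0 i. m ((\<lambda>x\<in>lam0 i. eql i x) x)) \<in> bmor (lam0 i) (F i) X FX" if "i \<in> I" for i
    using bmor_compose[OF eql_bmor[OF that] m] .
  moreover have "(\<lambda>x\<in>lam0 i. m ((\<lambda>x\<in>lam0 i. eql i x) x)) = (\<lambda>x\<in>lam0 i. m (eql i x))" for i
    by (intro restrict_ext) simp
  ultimately show "(\<lambda>i\<in>I. \<lambda>x\<in>lam0 i. m (eql i x)) \<in> (\<Pi>\<^sub>E i\<in>I. bmor (lam0 i) (F i) X FX)"
    by simp
  show "compatible (\<lambda>i\<in>I. \<lambda>x\<in>lam0 i. m (eql i x))"
    unfolding compatible_def by (simp add: transport_in eql_transport)
qed

lemma components_glue: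
  assumes \<Phi>: "\<Phi> \<in> cocones X FX"
  shows "components X FX (glue X FX \<Phi>) = \<Phi>"
proof -
  have "\<Phi> \<in> (\<Pi>\<^sub>E i\<in>I. bmor (lam0 i) (F i) X FX)" and "compatible \<Phi>"
    using \<Phi> unfolding mem_cocones_iff by blast+
  then have "(\<lambda>i\<in>I. \<lambda>x\<in>lam0 i. eql_map DLim \<Phi> (eql i x)) = \<Phi>"
    using eql_map_eql unfolding bmor_def
    by (intro extensionalityI[where A = I] extensionalityI[where A = "lam0 _"])
      (auto simp: PiE_iff)
  then show ?thesis
    unfolding components_def glue_def using \<Phi> eql_map_bmor[OF \<Phi>] by simp
qed

lemma glue_components:
  assumes m: "m \<in> bmor DLim DLimT X FX"
  shows "glue X FX (components X FX m) = m"
proof -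
  let ?\<Phi> = "\<lambda>i\<in>I. \<lambda>x\<in>lam0 i. m (eql i x)"
  have \<Phi>: "?\<Phi> \<in> cocones X FX"
    using components_in_cocones[OF m] .
  then have "compatible ?\<Phi>"
    unfolding mem_cocones_iff by blast
  have "eql_map DLim ?\<Phi> = m"
  proof (rule extensionalityI[where A = DLim])
    fix c assume "c \<in> DLim"
    then obtain i x where "i \<in> I" "x \<in> lam0 i" "c = eql i x"
      by (rule DLim_cases)
    then show "eql_map DLim ?\<Phi> c = m c"
      using eql_map_eql[OF \<open>compatible ?\<Phi>\<close>] by simp
  qed (use m in \<open>auto simp: eql_map_def bmor_def PiE_iff\<close>)
  then show ?thesis
    unfolding glue_def components_def using m \<Phi> by simp
qed

lemma glue_bmor:
  "glue X FX \<in> bmor (cocones X FX) (cocones_top X FX) (bmor DLim DLimT X FX) (exp_top DLim DLimT X FX)"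
  unfolding glue_def
proof (rule bmor_into_exp_topI[OF bishop_topology_invlim_top])
  show "(\<lambda>\<Phi>\<in>cocones X FX. eql_map DLim \<Phi>) \<in> cocones X FX \<rightarrow>\<^sub>E bmor DLim DLimT X FX"
    using eql_map_bmor by auto
next
  fix c g assume "c \<in> DLim" and g: "g \<in> FX"
  from \<open>c \<in> DLim\<close> obtain i x where i: "i \<in> I" and x: "x \<in> lam0 i" and c: "c = eql i x"
    by (rule DLim_cases)
  have "(\<lambda>\<Phi>\<in>cocones X FX. g ((\<lambda>\<Phi>\<in>cocones X FX. eql_map DLim \<Phi>) \<Phi> c))
      = (\<lambda>\<Phi>\<in>cocones X FX. (\<lambda>\<phi>\<in>bmor (lam0 i) (F i) X FX. g (\<phi> x)) (\<Phi> i))"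
    (is "?u = _")
  proof (rule restrict_ext)
    fix \<Phi> assume "\<Phi> \<in> cocones X FX"
    then have "compatible \<Phi>" and "\<Phi> i \<in> bmor (lam0 i) (F i) X FX"
      using i unfolding mem_cocones_iff by auto
    then show "g ((\<lambda>\<Phi>\<in>cocones X FX. eql_map DLim \<Phi>) \<Phi> c)
        = (\<lambda>\<phi>\<in>bmor (lam0 i) (F i) X FX. g (\<phi> x)) (\<Phi> i)"
      using \<open>\<Phi> \<in> cocones X FX\<close> c eql_map_eql[OF \<open>compatible \<Phi>\<close> i x] by simp
  qed
  also have "\<dots> \<in> cocones_top X FX"
    using i x g unfolding to_top_def
    by (intro projection_comp_in_invlim_top evaluation_in_exp_top)
  finally show "?u \<in> cocones_top X FX" .
qed

lemma components_bmor:
  "components X FX \<in> bmor (bmor DLim DLimT X FX) (exp_top DLim DLimT X FX) (cocones X FX) (cocones_top X FX)"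
  unfolding components_def
proof (rule bmor_into_invlim_topI[OF bishop_topology_exp_top])
  show "(\<lambda>m\<in>bmor DLim DLimT X FX. \<lambda>i\<in>I. \<lambda>x\<in>lam0 i. m (eql i x))
      \<in> bmor DLim DLimT X FX \<rightarrow>\<^sub>E cocones X FX"
    using components_in_cocones by auto
next
  fix i assume i: "i \<in> I"
  have "(\<lambda>m\<in>bmor DLim DLimT X FX. (\<lambda>m\<in>bmor DLim DLimT X FX. \<lambda>i\<in>I. \<lambda>x\<in>lam0 i. m (eql i x)) m i)
      = (\<lambda>m\<in>bmor DLim DLimT X FX. \<lambda>x\<in>lam0 i. m ((\<lambda>x\<in>lam0 i. eql i x) x))"
    (is "?u = _")
    using i by (auto intro!: restrict_ext)
  also have "\<dots> \<in> bmor (bmor DLim DLimT X FX) (exp_top DLim DLimT X FX)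
      (to_mor0 lam0 F X FX i) (to_top lam0 F X FX i)"
    unfolding to_mor0_def to_top_def using bmor_precompose[OF eql_bmor[OF i]] .
  finally show "?u \<in> bmor (bmor DLim DLimT X FX) (exp_top DLim DLimT X FX)
      (to_mor0 lam0 F X FX i) (to_top lam0 F X FX i)" .
qed

end

theorem theorem11p3:
  fixes I :: "'i set" and le :: "'i \<Rightarrow> 'i \<Rightarrow> bool"
    and lam0 :: "'i \<Rightarrow> 'a set" and lam :: "'i \<Rightarrow> 'i \<Rightarrow> 'a \<Rightarrow> 'a"
    and F :: "'i \<Rightarrow> ('a \<Rightarrow> real) set"
    and X :: "'x set" and FX :: "('x \<Rightarrow> real) set"
  assumes "directed_set I le"
    and "direct_spectrum I le lam0 lam F"
    and "bishop_topology X FX"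
  shows "bishop_isomorphic
     (invlim_carrier I le (to_mor0 lam0 F X FX) (to_transp lam0 lam))
     (invlim_top I le (to_mor0 lam0 F X FX) (to_transp lam0 lam) (to_top lam0 F X FX))
     (bmor (dirlim_carrier I le lam0 lam) (dirlim_top I le lam0 lam F) X FX)
     (exp_top (dirlim_carrier I le lam0 lam) (dirlim_top I le lam0 lam F) X FX)"
proof -
  interpret direct_system I le lam0 lam F
    using assms(1,2) by unfold_locales
  have "bishop_iso (cocones X FX) (cocones_top X FX)
      (bmor DLim DLimT X FX) (exp_top DLim DLimT X FX) (glue X FX)"
    by (rule bishop_isoI[OF glue_bmor components_bmor]) (simp_all add: components_glue glue_components)
  then show ?thesis
    unfolding bishop_isomorphic_def by blast
qed

end
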